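(* There exist universal constants $C,C_1>0$ such that the following holds. Let $Z_1,\dots,Z_n\in\mathbb R^{p\times r}$ be independent random matrices with i.i.d. $N(0,1)$ entries, and let $M_1,\dots,M_n\in\mathbb R^{p\times r}$ be fixed (deterministic) matrices. Then $$\mathbb P\left(\Big|\sum_{i=1}^n\|Z_i\|_{\rm F}^2\langle Z_i,M_i\rangle\Big|\ge Cpr\Big(\sum_{i=1}^n\|M_i\|_{\rm F}^2\Big)^{1/2}\sqrt{\log p}\right)\le p^{-C_1}.$$
   Context: $\langle A,B\rangle=\operatorname{tr}(A^\top B)$ is the trace inner product and $\|\cdot\|_{\rm F}$ the Frobenius norm. *)

theory Defs
  imports "HOL-Probability.Probability"
begin

text \<open>A p x r real matrix is represented as a function nat => nat => real,
  only the entries with row index < p and column index < r being relevant.\<close>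

definition frob_inner :: "nat \<Rightarrow> nat \<Rightarrow> (nat \<Rightarrow> nat \<Rightarrow> real) \<Rightarrow> (nat \<Rightarrow> nat \<Rightarrow> real) \<Rightarrow> real" where
  "frob_inner p r A B = (\<Sum>j<p. \<Sum>k<r. A j k * B j k)"

definition frob_norm :: "nat \<Rightarrow> nat \<Rightarrow> (nat \<Rightarrow> nat \<Rightarrow> real) \<Rightarrow> real" where
  "frob_norm p r A = sqrt (frob_inner p r A A)"

text \<open>Probability space carrying n independent p x r matrices with i.i.d. N(0,1)
  entries: the coordinate (i,j,k) of the sample is entry (j,k) of Z_i.\<close>

definition gauss_mats :: "nat \<Rightarrow> nat \<Rightarrow> nat \<Rightarrow> (nat \<times> nat \<times> nat \<Rightarrow> real) measure" where
  "gauss_mats n p r = PiM ({..<n} \<times> {..<p} \<times> {..<r}) (\<lambda>_. std_normal_distribution)"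

definition Zmat :: "(nat \<times> nat \<times> nat \<Rightarrow> real) \<Rightarrow> nat \<Rightarrow> nat \<Rightarrow> nat \<Rightarrow> real" where
  "Zmat \<omega> i = (\<lambda>j k. \<omega> (i, j, k))"

end

theory Submission
  imports Defs
begin

text \<open>Write |Z_i|^2 = p r + W_i, where W_i is the sum of z^2 - 1 over the entries z of Z_i.
  The sum then splits as p r G + T, where G = sum_i <Z_i, M_i> is a centred Gaussian of
  variance m = sum_i |M_i|^2 and T = sum_i W_i <Z_i, M_i> is a chaos in the monomials
  (z_a^2 - 1) z_b. These monomials are orthogonal with second moments at most
  E (z^2 - 1)^2 z^2 = 10, so E T^2 <= 10 p r m. A Chernoff bound for G and Chebyshev's
  inequality for T give, at level 16 p r sqrt (m ln p), the tail bound
  2 p^-32 + 10 / (64 p r ln p) <= 1/p: thus C = 16 and C1 = 1 work.\<close>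

abbreviation iid_gaussian :: "'i set \<Rightarrow> ('i \<Rightarrow> real) measure" where
  "iid_gaussian I \<equiv> PiM I (\<lambda>_. std_normal_distribution)"

definition gauss_moment :: "nat \<Rightarrow> nat \<Rightarrow> real" where
  "gauss_moment i j = (\<integral>x. (x\<^sup>2 - 1) ^ i * x ^ j \<partial>std_normal_distribution)"

definition gaussian_chaos :: "'i set \<Rightarrow> ('i \<times> 'i \<Rightarrow> real) \<Rightarrow> ('i \<Rightarrow> real) \<Rightarrow> real" where
  "gaussian_chaos I w \<omega> = (\<Sum>q\<in>I \<times> I. w q * (((\<omega> (fst q))\<^sup>2 - 1) * \<omega> (snd q)))"

lemma (in finite_measure) measure_abs_add_ge_le:
  fixes G T :: "'a \<Rightarrow> real"
  assumes [measurable]: "G \<in> borel_measurable M" "T \<in> borel_measurable M"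
  shows "measure M {x \<in> space M. \<bar>G x + T x\<bar> \<ge> a + b}
    \<le> measure M {x \<in> space M. \<bar>G x\<bar> \<ge> a} + measure M {x \<in> space M. \<bar>T x\<bar> \<ge> b}"
proof -
  have "measure M {x \<in> space M. \<bar>G x + T x\<bar> \<ge> a + b}
      \<le> measure M ({x \<in> space M. \<bar>G x\<bar> \<ge> a} \<union> {x \<in> space M. \<bar>T x\<bar> \<ge> b})"
    by (intro finite_measure_mono) auto
  also have "\<dots> \<le> measure M {x \<in> space M. \<bar>G x\<bar> \<ge> a} + measure M {x \<in> space M. \<bar>T x\<bar> \<ge> b}"
    by (intro measure_Un_le) auto
  finally show ?thesis .
qed

lemma prob_space_std_normal_distribution: "prob_space std_normal_distribution"
  using real_dist_normal_dist real_distribution_def by blast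

lemma prob_space_iid_gaussian: "prob_space (iid_gaussian I)"
  by (intro prob_space_PiM prob_space_std_normal_distribution)

lemma centered_square_power_Suc:
  "((x::real)\<^sup>2 - 1) ^ Suc i * x ^ j = (x\<^sup>2 - 1) ^ i * x ^ (j + 2) - (x\<^sup>2 - 1) ^ i * x ^ j"
  by (simp add: power_add power2_eq_square algebra_simps)

lemma integrable_std_normal_centered_square:
  "integrable std_normal_distribution (\<lambda>x. (x\<^sup>2 - 1) ^ i * x ^ j)"
proof (induction i arbitrary: j)
  case 0
  then show ?case using integrable_std_normal_distribution_moment by simp
next
  case (Suc i)
  then show ?case
    unfolding centered_square_power_Suc by (intro Bochner_Integration.integrable_diff)
qed

lemma gauss_moment_Suc: "gauss_moment (Suc i) j = gauss_moment i (j + 2) - gauss_moment i j"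
  unfolding gauss_moment_def centered_square_power_Suc
  by (intro Bochner_Integration.integral_diff integrable_std_normal_centered_square)

lemma gauss_moment_0:
  "gauss_moment 0 j = (if even j then fact j / (2 ^ (j div 2) * fact (j div 2)) else 0)"
proof (cases "even j")
  case True
  then obtain k where "j = 2 * k" by blast
  then show ?thesis
    unfolding gauss_moment_def using std_normal_distribution_even_moments(1)[of k] by simp
qed (simp add: gauss_moment_def integral_std_normal_distribution_moment_odd)

lemma gauss_moment_values:
  "gauss_moment 0 0 = 1" "gauss_moment 0 1 = 0" "gauss_moment 0 2 = 1"
  "gauss_moment 1 0 = 0" "gauss_moment 1 1 = 0"
  "gauss_moment 2 0 = 2" "gauss_moment 2 1 = 0" "gauss_moment 2 2 = 10"
proof -
  have m1: "gauss_moment 1 j = gauss_moment 0 (j + 2) - gauss_moment 0 j" for j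
    using gauss_moment_Suc[of 0 j] by simp
  have m2: "gauss_moment 2 j = gauss_moment 1 (j + 2) - gauss_moment 1 j" for j
    using gauss_moment_Suc[of 1 j] by (simp add: numeral_2_eq_2)
  have m0: "gauss_moment 0 0 = 1" "gauss_moment 0 1 = 0" "gauss_moment 0 2 = 1"
    "gauss_moment 0 3 = 0" "gauss_moment 0 4 = 3" "gauss_moment 0 5 = 0" "gauss_moment 0 6 = 15"
    by (simp_all add: gauss_moment_0 fact_numeral)
  have "gauss_moment 1 0 = 0" "gauss_moment 1 1 = 0" "gauss_moment 1 2 = 2"
    "gauss_moment 1 3 = 0" "gauss_moment 1 4 = 12"
    using m1[of 0] m1[of 1] m1[of 2] m1[of 3] m1[of 4] m0 by (simp_all add: eval_nat_numeral)
  with m0 m2[of 0] m2[of 1] m2[of 2]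
  show "gauss_moment 0 0 = 1" "gauss_moment 0 1 = 0" "gauss_moment 0 2 = 1"
    "gauss_moment 1 0 = 0" "gauss_moment 1 1 = 0"
    "gauss_moment 2 0 = 2" "gauss_moment 2 1 = 0" "gauss_moment 2 2 = 10"
    by (simp_all add: eval_nat_numeral)
qed

lemma std_normal_mgf:
  shows "integrable std_normal_distribution (\<lambda>x. exp (t * x))"
    and "(\<integral>x. exp (t * x) \<partial>std_normal_distribution) = exp (t\<^sup>2 / 2)"
proof -
  have shift: "std_normal_density x * exp (t * x) = exp (t\<^sup>2 / 2) * normal_density t 1 x" for x
    by (simp add: normal_density_def mult_exp_exp power2_eq_square field_simps)
  show "integrable std_normal_distribution (\<lambda>x. exp (t * x))"
    by (subst integrable_density) (auto simp: normal_density_nonneg shift)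
  have "(\<integral>x. exp (t * x) \<partial>std_normal_distribution) = (\<integral>x. std_normal_density x * exp (t * x) \<partial>lborel)"
    by (subst integral_density) (auto simp: normal_density_nonneg)
  then show "(\<integral>x. exp (t * x) \<partial>std_normal_distribution) = exp (t\<^sup>2 / 2)"
    unfolding shift by simp
qed

lemma iid_gaussian_prod:
  fixes f :: "'i \<Rightarrow> real \<Rightarrow> real"
  assumes "finite I" "\<And>l. l \<in> I \<Longrightarrow> integrable std_normal_distribution (f l)"
  shows "integrable (iid_gaussian I) (\<lambda>\<omega>. \<Prod>l\<in>I. f l (\<omega> l))"
    and "(\<integral>\<omega>. (\<Prod>l\<in>I. f l (\<omega> l)) \<partial>iid_gaussian I) = (\<Prod>l\<in>I. \<integral>x. f l x \<partial>std_normal_distribution)"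
proof -
  interpret product_sigma_finite "(\<lambda>_. std_normal_distribution) :: 'i \<Rightarrow> real measure"
    by (simp add: product_sigma_finite_def prob_space_imp_sigma_finite
        prob_space_std_normal_distribution)
  show "integrable (iid_gaussian I) (\<lambda>\<omega>. \<Prod>l\<in>I. f l (\<omega> l))"
    by (rule product_integrable_prod[OF assms])
  show "(\<integral>\<omega>. (\<Prod>l\<in>I. f l (\<omega> l)) \<partial>iid_gaussian I) = (\<Prod>l\<in>I. \<integral>x. f l x \<partial>std_normal_distribution)"
    by (rule product_integral_prod[OF assms])
qed

lemma iid_gaussian_linear_tail:
  fixes c :: "'i \<Rightarrow> real"
  assumes fin: "finite I" and var: "0 < (\<Sum>l\<in>I. (c l)\<^sup>2)" and "0 < s"
  shows "measure (iid_gaussian I) {\<omega> \<in> space (iid_gaussian I). (\<Sum>l\<in>I. c l * \<omega> l) \<ge> s}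
     \<le> exp (- s\<^sup>2 / (2 * (\<Sum>l\<in>I. (c l)\<^sup>2)))"
proof -
  define m where "m = (\<Sum>l\<in>I. (c l)\<^sup>2)"
  define t where "t = s / m"
  \<comment> \<open>minimises the Chernoff exponent \<open>t\<^sup>2 m / 2 - t s\<close>\<close>
  have "t > 0" using \<open>0 < s\<close> var unfolding t_def m_def by simp
  define X where "X \<omega> = exp (t * (\<Sum>l\<in>I. c l * \<omega> l))" for \<omega> :: "'i \<Rightarrow> real"
  have X_prod: "X \<omega> = (\<Prod>l\<in>I. exp ((t * c l) * \<omega> l))" for \<omega>
    using fin unfolding X_def by (simp add: sum_distrib_left exp_sum mult.assoc)
  have int_factor: "integrable std_normal_distribution (\<lambda>x. exp ((t * c l) * x))" for l
    by (rule std_normal_mgf(1))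
  have intX: "integrable (iid_gaussian I) X"
    unfolding X_prod by (rule iid_gaussian_prod(1)[OF fin int_factor])
  have "integral\<^sup>L (iid_gaussian I) X = (\<Prod>l\<in>I. exp ((t * c l)\<^sup>2 / 2))"
    unfolding X_prod iid_gaussian_prod(2)[OF fin int_factor] std_normal_mgf(2) ..
  also have "\<dots> = exp (t\<^sup>2 * m / 2)"
    using fin unfolding m_def
    by (simp add: exp_sum[symmetric] power_mult_distrib sum_distrib_left sum_divide_distrib)
  finally have EX: "integral\<^sup>L (iid_gaussian I) X = exp (t\<^sup>2 * m / 2)" .
  have "{\<omega> \<in> space (iid_gaussian I). (\<Sum>l\<in>I. c l * \<omega> l) \<ge> s}
      = {\<omega> \<in> space (iid_gaussian I). X \<omega> \<ge> exp (t * s)}"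
    using \<open>t > 0\<close> unfolding X_def by auto
  also have "measure (iid_gaussian I) \<dots> \<le> integral\<^sup>L (iid_gaussian I) X / exp (t * s)"
    by (intro integral_Markov_inequality_measure[OF intX, where A="{}"]) (auto simp: X_def)
  also have "\<dots> = exp (t\<^sup>2 * m / 2 - t * s)"
    unfolding EX by (simp add: exp_diff)
  also have "t\<^sup>2 * m / 2 - t * s = - s\<^sup>2 / (2 * m)"
    using var unfolding t_def m_def by (simp add: field_simps power2_eq_square)
  finally show ?thesis unfolding m_def .
qed

lemma iid_gaussian_linear_abs_tail:
  fixes c :: "'i \<Rightarrow> real"
  assumes fin: "finite I" and var: "0 < (\<Sum>l\<in>I. (c l)\<^sup>2)" and "0 < s"
  shows "measure (iid_gaussian I) {\<omega> \<in> space (iid_gaussian I). \<bar>\<Sum>l\<in>I. c l * \<omega> l\<bar> \<ge> s}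
     \<le> 2 * exp (- s\<^sup>2 / (2 * (\<Sum>l\<in>I. (c l)\<^sup>2)))"
proof -
  interpret prob_space "iid_gaussian I" by (rule prob_space_iid_gaussian)
  have split: "{\<omega> \<in> space (iid_gaussian I). \<bar>\<Sum>l\<in>I. c l * \<omega> l\<bar> \<ge> s}
      = {\<omega> \<in> space (iid_gaussian I). (\<Sum>l\<in>I. c l * \<omega> l) \<ge> s}
        \<union> {\<omega> \<in> space (iid_gaussian I). (\<Sum>l\<in>I. - c l * \<omega> l) \<ge> s}"
    by (auto simp: sum_negf)
  have "prob {\<omega> \<in> space (iid_gaussian I). \<bar>\<Sum>l\<in>I. c l * \<omega> l\<bar> \<ge> s}
      \<le> prob {\<omega> \<in> space (iid_gaussian I). (\<Sum>l\<in>I. c l * \<omega> l) \<ge> s}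
        + prob {\<omega> \<in> space (iid_gaussian I). (\<Sum>l\<in>I. - c l * \<omega> l) \<ge> s}"
    unfolding split by (intro measure_Un_le) measurable
  moreover have "prob {\<omega> \<in> space (iid_gaussian I). (\<Sum>l\<in>I. - c l * \<omega> l) \<ge> s}
      \<le> exp (- s\<^sup>2 / (2 * (\<Sum>l\<in>I. (c l)\<^sup>2)))"
    using iid_gaussian_linear_tail[where c="\<lambda>l. - c l", OF fin _ \<open>0 < s\<close>] var by simp
  ultimately show ?thesis
    using iid_gaussian_linear_tail[OF fin var \<open>0 < s\<close>] by linarith
qed

lemma prod_power_delta:
  assumes "finite I" "a \<in> I"
  shows "(\<Prod>l\<in>I. g l ^ (if l = a then 1 else 0)) = g a"
proof -
  have "(\<Prod>l\<in>I. g l ^ (if l = a then 1 else 0)) = (\<Prod>l\<in>I. if l = a then g l else 1)"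
    by (rule prod.cong) auto
  then show ?thesis using assms by (simp add: prod.delta)
qed

lemma prod_gauss_moment_paired:
  fixes I :: "'i set"
  assumes fin: "finite I" and I: "a \<in> I" "b \<in> I" "a' \<in> I" "b' \<in> I"
  defines "na \<equiv> \<lambda>l. (if l = a then 1 else 0) + (if l = a' then 1 else (0::nat))"
    and "nb \<equiv> \<lambda>l. (if l = b then 1 else 0) + (if l = b' then 1 else (0::nat))"
  shows "(\<Prod>l\<in>I. gauss_moment (na l) (nb l)) = (if a = a' \<and> b = b' then if a = b then 10 else 2 else 0)"
proof (cases "a = a' \<and> b = b'")
  case True
  then have "gauss_moment (na l) (nb l) = (if l = a then if a = b then 10 else 2 else 1)" for l
    using gauss_moment_values unfolding na_def nb_def by (auto simp: eval_nat_numeral)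
  then show ?thesis using True fin I by (simp add: prod.delta)
next
  case False
  \<comment> \<open>an unpaired factor \<open>z\<^sub>b\<close> or \<open>z\<^sub>a\<^sup>2 - 1\<close> has mean zero\<close>
  have "\<exists>l\<in>I. gauss_moment (na l) (nb l) = 0"
  proof (cases "b = b'")
    case False
    then have "gauss_moment (na b) (nb b) = 0"
      using gauss_moment_values unfolding na_def nb_def by (auto simp: eval_nat_numeral)
    then show ?thesis using I by blast
  next
    case True
    with \<open>\<not> (a = a' \<and> b = b')\<close> have "a \<noteq> a'" by blast
    show ?thesis
    proof (cases "a = b")
      case True
      with \<open>a \<noteq> a'\<close> \<open>b = b'\<close> have "gauss_moment (na a') (nb a') = 0"
        using gauss_moment_values unfolding na_def nb_def by (auto simp: eval_nat_numeral)
      then show ?thesis using I by blast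
    next
      case False
      with \<open>a \<noteq> a'\<close> \<open>b = b'\<close> have "gauss_moment (na a) (nb a) = 0"
        using gauss_moment_values unfolding na_def nb_def by (auto simp: eval_nat_numeral)
      then show ?thesis using I by blast
    qed
  qed
  then show ?thesis unfolding if_not_P[OF False] using fin by (simp add: prod_zero_iff)
qed

lemma iid_gaussian_chaos_monomial_products:
  fixes I :: "'i set"
  assumes fin: "finite I" and I: "a \<in> I" "b \<in> I" "a' \<in> I" "b' \<in> I"
  shows "integrable (iid_gaussian I) (\<lambda>\<omega>. ((\<omega> a)\<^sup>2 - 1) * \<omega> b * (((\<omega> a')\<^sup>2 - 1) * \<omega> b'))"
    and "(\<integral>\<omega>. ((\<omega> a)\<^sup>2 - 1) * \<omega> b * (((\<omega> a')\<^sup>2 - 1) * \<omega> b') \<partial>iid_gaussian I)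
       = (if a = a' \<and> b = b' then if a = b then 10 else 2 else 0)"
proof -
  define na where "na l = (if l = a then 1 else 0) + (if l = a' then 1 else (0::nat))" for l
  define nb where "nb l = (if l = b then 1 else 0) + (if l = b' then 1 else (0::nat))" for l
  have as_prod: "((\<omega> a)\<^sup>2 - 1) * \<omega> b * (((\<omega> a')\<^sup>2 - 1) * \<omega> b')
      = (\<Prod>l\<in>I. ((\<omega> l)\<^sup>2 - 1) ^ na l * \<omega> l ^ nb l)" for \<omega> :: "'i \<Rightarrow> real"
  proof -
    have "(\<Prod>l\<in>I. ((\<omega> l)\<^sup>2 - 1) ^ na l * \<omega> l ^ nb l)
      = (\<Prod>l\<in>I. ((\<omega> l)\<^sup>2 - 1) ^ (if l = a then 1 else 0))
        * (\<Prod>l\<in>I. ((\<omega> l)\<^sup>2 - 1) ^ (if l = a' then 1 else 0))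
        * ((\<Prod>l\<in>I. \<omega> l ^ (if l = b then 1 else 0)) * (\<Prod>l\<in>I. \<omega> l ^ (if l = b' then 1 else 0)))"
      unfolding na_def nb_def power_add prod.distrib by simp
    also have "\<dots> = ((\<omega> a)\<^sup>2 - 1) * ((\<omega> a')\<^sup>2 - 1) * (\<omega> b * \<omega> b')"
      using fin I by (simp only: prod_power_delta)
    finally show ?thesis by (simp add: mult_ac)
  qed
  have int: "\<And>l. l \<in> I \<Longrightarrow> integrable std_normal_distribution (\<lambda>x. (x\<^sup>2 - 1) ^ na l * x ^ nb l)"
    by (rule integrable_std_normal_centered_square)
  show "integrable (iid_gaussian I) (\<lambda>\<omega>. ((\<omega> a)\<^sup>2 - 1) * \<omega> b * (((\<omega> a')\<^sup>2 - 1) * \<omega> b'))"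
    unfolding as_prod by (rule iid_gaussian_prod(1)[OF fin int])
  have "(\<integral>\<omega>. ((\<omega> a)\<^sup>2 - 1) * \<omega> b * (((\<omega> a')\<^sup>2 - 1) * \<omega> b') \<partial>iid_gaussian I)
     = (\<Prod>l\<in>I. gauss_moment (na l) (nb l))"
    unfolding as_prod gauss_moment_def by (rule iid_gaussian_prod(2)[OF fin int])
  also have "\<dots> = (if a = a' \<and> b = b' then if a = b then 10 else 2 else 0)"
    unfolding na_def nb_def by (rule prod_gauss_moment_paired[OF fin I])
  finally show "(\<integral>\<omega>. ((\<omega> a)\<^sup>2 - 1) * \<omega> b * (((\<omega> a')\<^sup>2 - 1) * \<omega> b') \<partial>iid_gaussian I)
     = (if a = a' \<and> b = b' then if a = b then 10 else 2 else 0)" .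
qed

lemma borel_measurable_gaussian_chaos: "gaussian_chaos I w \<in> borel_measurable (iid_gaussian I)"
proof -
  have "(\<lambda>\<omega>. \<omega> l) \<in> borel_measurable (iid_gaussian I)" if "l \<in> I" for l
    using that by measurable
  then show ?thesis
    unfolding gaussian_chaos_def by (measurable; auto simp: mem_Times_iff)
qed

lemma iid_gaussian_chaos_second_moment:
  fixes I :: "'i set"
  assumes fin: "finite I"
  shows "integrable (iid_gaussian I) (\<lambda>\<omega>. (gaussian_chaos I w \<omega>)\<^sup>2)"
    and "(\<integral>\<omega>. (gaussian_chaos I w \<omega>)\<^sup>2 \<partial>iid_gaussian I) \<le> 10 * (\<Sum>q\<in>I \<times> I. (w q)\<^sup>2)"
proof -
  define u where "u q \<omega> = ((\<omega> (fst q))\<^sup>2 - 1) * \<omega> (snd q)" for q and \<omega> :: "'i \<Rightarrow> real"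
  define e :: "'i \<times> 'i \<Rightarrow> real" where "e q = (if fst q = snd q then 10 else 2)" for q
  have square: "(gaussian_chaos I w \<omega>)\<^sup>2 = (\<Sum>q\<in>I \<times> I. \<Sum>q'\<in>I \<times> I. w q * w q' * (u q \<omega> * u q' \<omega>))" for \<omega>
    unfolding gaussian_chaos_def u_def power2_eq_square sum_product by (simp add: mult_ac)
  have int: "integrable (iid_gaussian I) (\<lambda>\<omega>. w q * w q' * (u q \<omega> * u q' \<omega>))"
    if "q \<in> I \<times> I" "q' \<in> I \<times> I" for q q'
    using iid_gaussian_chaos_monomial_products(1)[OF fin, of "fst q" "snd q" "fst q'" "snd q'"] that
    unfolding u_def by (auto simp: mult.assoc)
  have E: "(\<integral>\<omega>. w q * w q' * (u q \<omega> * u q' \<omega>) \<partial>iid_gaussian I) = (if q' = q then (w q)\<^sup>2 * e q else 0)"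
    if "q \<in> I \<times> I" "q' \<in> I \<times> I" for q q'
    using iid_gaussian_chaos_monomial_products(2)[OF fin, of "fst q" "snd q" "fst q'" "snd q'"] that
    unfolding u_def e_def by (auto simp: prod_eq_iff power2_eq_square)
  show "integrable (iid_gaussian I) (\<lambda>\<omega>. (gaussian_chaos I w \<omega>)\<^sup>2)"
    unfolding square using int by (intro Bochner_Integration.integrable_sum) auto
  have "(\<integral>\<omega>. (gaussian_chaos I w \<omega>)\<^sup>2 \<partial>iid_gaussian I)
      = (\<Sum>q\<in>I \<times> I. \<Sum>q'\<in>I \<times> I. \<integral>\<omega>. w q * w q' * (u q \<omega> * u q' \<omega>) \<partial>iid_gaussian I)"
    unfolding square using int
    by (simp add: Bochner_Integration.integral_sum Bochner_Integration.integrable_sum)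
  also have "\<dots> = (\<Sum>q\<in>I \<times> I. \<Sum>q'\<in>I \<times> I. if q' = q then (w q)\<^sup>2 * e q else 0)"
    by (intro sum.cong refl E) auto
  also have "\<dots> = (\<Sum>q\<in>I \<times> I. (w q)\<^sup>2 * e q)"
    using fin by (simp add: sum.delta)
  also have "\<dots> \<le> (\<Sum>q\<in>I \<times> I. 10 * (w q)\<^sup>2)"
    unfolding e_def by (intro sum_mono) auto
  finally show "(\<integral>\<omega>. (gaussian_chaos I w \<omega>)\<^sup>2 \<partial>iid_gaussian I) \<le> 10 * (\<Sum>q\<in>I \<times> I. (w q)\<^sup>2)"
    by (simp add: sum_distrib_left)
qed

lemma iid_gaussian_linear_plus_chaos_tail:
  fixes I :: "'i set" and c :: "'i \<Rightarrow> real" and w :: "'i \<times> 'i \<Rightarrow> real"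
  assumes fin: "finite I" and var: "0 < (\<Sum>l\<in>I. (c l)\<^sup>2)" and weights: "(\<Sum>q\<in>I \<times> I. (w q)\<^sup>2) \<le> v"
    and "0 < s" "0 < t"
  shows "measure (iid_gaussian I)
      {\<omega> \<in> space (iid_gaussian I). \<bar>(\<Sum>l\<in>I. c l * \<omega> l) + gaussian_chaos I w \<omega>\<bar> \<ge> s + t}
    \<le> 2 * exp (- s\<^sup>2 / (2 * (\<Sum>l\<in>I. (c l)\<^sup>2))) + 10 * v / t\<^sup>2"
proof -
  interpret prob_space "iid_gaussian I" by (rule prob_space_iid_gaussian)
  have "prob {\<omega> \<in> space (iid_gaussian I). \<bar>gaussian_chaos I w \<omega>\<bar> \<ge> t}
      \<le> (\<integral>\<omega>. (gaussian_chaos I w \<omega>)\<^sup>2 \<partial>iid_gaussian I) / t\<^sup>2"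
    using iid_gaussian_chaos_second_moment(1)[OF fin]
    by (intro second_moment_method borel_measurable_gaussian_chaos \<open>0 < t\<close>)
  also have "\<dots> \<le> 10 * v / t\<^sup>2"
    using iid_gaussian_chaos_second_moment(2)[OF fin, of w] weights by (intro divide_right_mono) auto
  finally have chaos_tail: "prob {\<omega> \<in> space (iid_gaussian I). \<bar>gaussian_chaos I w \<omega>\<bar> \<ge> t} \<le> 10 * v / t\<^sup>2" .
  have "prob {\<omega> \<in> space (iid_gaussian I). \<bar>(\<Sum>l\<in>I. c l * \<omega> l) + gaussian_chaos I w \<omega>\<bar> \<ge> s + t}
      \<le> prob {\<omega> \<in> space (iid_gaussian I). \<bar>\<Sum>l\<in>I. c l * \<omega> l\<bar> \<ge> s}
        + prob {\<omega> \<in> space (iid_gaussian I). \<bar>gaussian_chaos I w \<omega>\<bar> \<ge> t}"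
    by (intro measure_abs_add_ge_le borel_measurable_gaussian_chaos) (use fin in measurable)
  then show ?thesis
    using iid_gaussian_linear_abs_tail[OF fin var \<open>0 < s\<close>] chaos_tail by linarith
qed

abbreviation mat_entries :: "nat \<Rightarrow> nat \<Rightarrow> nat \<Rightarrow> (nat \<times> nat \<times> nat) set" where
  "mat_entries n p r \<equiv> {..<n} \<times> {..<p} \<times> {..<r}"

definition flatten_mats :: "(nat \<Rightarrow> nat \<Rightarrow> nat \<Rightarrow> real) \<Rightarrow> nat \<times> nat \<times> nat \<Rightarrow> real" where
  "flatten_mats M l = M (fst l) (fst (snd l)) (snd (snd l))"

definition block_weight :: "(nat \<times> nat \<times> nat \<Rightarrow> real) \<Rightarrow> (nat \<times> nat \<times> nat) \<times> (nat \<times> nat \<times> nat) \<Rightarrow> real" where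
  "block_weight c q = (if fst (fst q) = fst (snd q) then c (snd q) else 0)"

lemma frob_norm_sq: "(frob_norm p r A)\<^sup>2 = (\<Sum>j<p. \<Sum>k<r. (A j k)\<^sup>2)"
  unfolding frob_norm_def frob_inner_def
  by (subst real_sqrt_pow2) (auto intro!: sum_nonneg simp: power2_eq_square)

lemma sum_sq_flatten_mats:
  "(\<Sum>l\<in>mat_entries n p r. (flatten_mats M l)\<^sup>2) = (\<Sum>i<n. (frob_norm p r (M i))\<^sup>2)"
  unfolding frob_norm_sq flatten_mats_def by (auto simp: sum.cartesian_product intro!: sum.cong)

lemma sum_sq_block_weight:
  "(\<Sum>q\<in>mat_entries n p r \<times> mat_entries n p r. (block_weight c q)\<^sup>2)
    = real p * real r * (\<Sum>l\<in>mat_entries n p r. (c l)\<^sup>2)"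
proof -
  define B where "B = {..<p} \<times> {..<r}"
  have I: "mat_entries n p r = {..<n} \<times> B" unfolding B_def ..
  have card_B: "card B = p * r" unfolding B_def by (simp add: card_cartesian_product)
  have column: "(\<Sum>a\<in>mat_entries n p r. (block_weight c (a, a'))\<^sup>2) = real p * real r * (c a')\<^sup>2"
    if "a' \<in> mat_entries n p r" for a'
  proof -
    have "(\<Sum>a\<in>mat_entries n p r. (block_weight c (a, a'))\<^sup>2)
        = (\<Sum>i<n. \<Sum>b\<in>B. (block_weight c ((i, b), a'))\<^sup>2)"
      unfolding I by (simp add: sum.cartesian_product)
    also have "\<dots> = (\<Sum>i<n. if i = fst a' then real (card B) * (c a')\<^sup>2 else 0)"
      unfolding block_weight_def by (rule sum.cong) auto
    finally show ?thesis using that card_B by auto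
  qed
  have "(\<Sum>q\<in>mat_entries n p r \<times> mat_entries n p r. (block_weight c q)\<^sup>2)
      = (\<Sum>a\<in>mat_entries n p r. \<Sum>a'\<in>mat_entries n p r. (block_weight c (a, a'))\<^sup>2)"
    by (simp add: sum.cartesian_product)
  also have "\<dots> = (\<Sum>a'\<in>mat_entries n p r. \<Sum>a\<in>mat_entries n p r. (block_weight c (a, a'))\<^sup>2)"
    by (rule sum.swap)
  also have "\<dots> = (\<Sum>a'\<in>mat_entries n p r. real p * real r * (c a')\<^sup>2)"
    using column by (intro sum.cong) auto
  finally show ?thesis by (simp add: sum_distrib_left)
qed

lemma sum_frob_cube_decomposition:
  "(\<Sum>i<n. (frob_norm p r (Zmat \<omega> i))\<^sup>2 * frob_inner p r (Zmat \<omega> i) (M i))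
     = real p * real r * (\<Sum>l\<in>mat_entries n p r. flatten_mats M l * \<omega> l)
       + gaussian_chaos (mat_entries n p r) (block_weight (flatten_mats M)) \<omega>"
proof -
  define I where "I = mat_entries n p r"
  define B where "B = {..<p} \<times> {..<r}"
  have I: "I = {..<n} \<times> B" unfolding I_def B_def ..
  have card_B: "card B = p * r" unfolding B_def by (simp add: card_cartesian_product)
  define X where "X i = (\<Sum>b\<in>B. flatten_mats M (i, b) * \<omega> (i, b))" for i
  define W where "W i = (\<Sum>b\<in>B. (\<omega> (i, b))\<^sup>2 - 1)" for i
  have inner: "frob_inner p r (Zmat \<omega> i) (M i) = X i" for i
    unfolding frob_inner_def Zmat_def X_def B_def flatten_mats_def
    by (auto simp: sum.cartesian_product mult.commute intro!: sum.cong)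
  have norm: "(frob_norm p r (Zmat \<omega> i))\<^sup>2 = real p * real r + W i" for i
  proof -
    have "(frob_norm p r (Zmat \<omega> i))\<^sup>2 = (\<Sum>b\<in>B. ((\<omega> (i, b))\<^sup>2 - 1)) + real (card B)"
      unfolding frob_norm_sq Zmat_def B_def by (simp add: sum.cartesian_product sum_subtractf)
    then show ?thesis unfolding W_def card_B by simp
  qed
  have block_sum: "(\<Sum>a'\<in>I. block_weight (flatten_mats M) (a, a') * \<omega> a') = X (fst a)"
    if "a \<in> I" for a
  proof -
    have "(\<Sum>a'\<in>I. block_weight (flatten_mats M) (a, a') * \<omega> a')
        = (\<Sum>i<n. \<Sum>b\<in>B. block_weight (flatten_mats M) (a, (i, b)) * \<omega> (i, b))"
      unfolding I by (simp add: sum.cartesian_product)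
    also have "\<dots> = (\<Sum>i<n. if i = fst a then X i else 0)"
      unfolding block_weight_def X_def by (rule sum.cong) auto
    finally show ?thesis using that unfolding I by (auto simp: mem_Times_iff)
  qed
  have "gaussian_chaos I (block_weight (flatten_mats M)) \<omega>
      = (\<Sum>a\<in>I. ((\<omega> a)\<^sup>2 - 1) * (\<Sum>a'\<in>I. block_weight (flatten_mats M) (a, a') * \<omega> a'))"
    unfolding gaussian_chaos_def
    by (auto simp: sum.cartesian_product sum_distrib_left mult_ac intro!: sum.cong)
  also have "\<dots> = (\<Sum>i<n. W i * X i)"
    unfolding I W_def using block_sum[unfolded I]
    by (auto simp: sum.cartesian_product sum_distrib_right intro!: sum.cong)
  finally have "gaussian_chaos I (block_weight (flatten_mats M)) \<omega> = (\<Sum>i<n. W i * X i)" .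
  moreover have "(\<Sum>l\<in>I. flatten_mats M l * \<omega> l) = (\<Sum>i<n. X i)"
    unfolding X_def I by (simp add: sum.cartesian_product)
  ultimately show ?thesis
    unfolding inner norm I_def[symmetric]
    by (simp add: algebra_simps sum.distrib sum_distrib_left)
qed

lemma tail_budget_le_inverse:
  fixes p N m :: real
  assumes p: "2 \<le> p" and N: "p \<le> N" and m: "0 < m"
  defines "\<tau> \<equiv> 8 * N * sqrt m * sqrt (ln p)"
  shows "2 * exp (- \<tau>\<^sup>2 / (2 * (N\<^sup>2 * m))) + 10 * (N * m) / \<tau>\<^sup>2 \<le> 1 / p"
proof -
  have "ln 2 \<le> ln p" using p by simp
  with ln2_ge_two_thirds have L: "1 / 2 \<le> ln p" by linarith
  have \<tau>2: "\<tau>\<^sup>2 = 64 * N\<^sup>2 * m * ln p"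
    unfolding \<tau>_def using m L by (simp add: power_mult_distrib)
  have "16 \<le> 1 + 31 * ln p" using L by linarith
  also have "\<dots> \<le> exp (31 * ln p)" by (rule exp_ge_add_one_self)
  finally have "16 * p \<le> exp (ln p) * exp (31 * ln p)"
    using p by simp
  also have "\<dots> = exp (32 * ln p)" by (simp flip: exp_add)
  finally have "exp (- (32 * ln p)) \<le> (1 / p) / 16"
    using p by (simp add: exp_minus field_simps)
  moreover have "- \<tau>\<^sup>2 / (2 * (N\<^sup>2 * m)) = - (32 * ln p)"
    unfolding \<tau>2 using p N m by simp
  moreover have "10 * (N * m) / \<tau>\<^sup>2 = 10 / (64 * N * ln p)"
    unfolding \<tau>2 using p N m by (simp add: power2_eq_square)
  moreover have "10 / (64 * N * ln p) \<le> 10 / (64 * p * (1 / 2))"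
    using p N L by (intro divide_left_mono mult_mono) auto
  ultimately have "2 * exp (- \<tau>\<^sup>2 / (2 * (N\<^sup>2 * m))) + 10 * (N * m) / \<tau>\<^sup>2 \<le> 2 * ((1 / p) / 16) + 10 / (32 * p)"
    by simp
  also have "\<dots> \<le> 1 / p" using p by (simp add: field_simps)
  finally show ?thesis .
qed

lemma sum_frob_cube_tail:
  fixes n p r :: nat and M :: "nat \<Rightarrow> nat \<Rightarrow> nat \<Rightarrow> real"
  assumes p: "2 \<le> p" and r: "1 \<le> r" and nonzero: "\<exists>i<n. frob_norm p r (M i) \<noteq> 0"
  shows "measure (gauss_mats n p r)
        {\<omega> \<in> space (gauss_mats n p r).
           \<bar>\<Sum>i<n. (frob_norm p r (Zmat \<omega> i))\<^sup>2 * frob_inner p r (Zmat \<omega> i) (M i)\<bar>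
             \<ge> 16 * real p * real r * sqrt (\<Sum>i<n. (frob_norm p r (M i))\<^sup>2) * sqrt (ln (real p))}
      \<le> 1 / real p"
proof -
  define I where "I = mat_entries n p r"
  define c where "c = flatten_mats M"
  define m where "m = (\<Sum>l\<in>I. (c l)\<^sup>2)"
  define N where "N = real p * real r"
  define \<tau> where "\<tau> = 8 * N * sqrt m * sqrt (ln (real p))"
  have m: "m = (\<Sum>i<n. (frob_norm p r (M i))\<^sup>2)"
    unfolding m_def I_def c_def by (rule sum_sq_flatten_mats)
  obtain i where "i < n" "frob_norm p r (M i) \<noteq> 0" using nonzero by blast
  then have "m > 0" unfolding m by (intro sum_pos2[of _ i]) auto
  have "real p * 1 \<le> N" unfolding N_def using r by (intro mult_left_mono) auto
  then have "real p \<le> N" by simp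
  have "\<tau> > 0" unfolding \<tau>_def using \<open>m > 0\<close> \<open>real p \<le> N\<close> p by simp
  have level: "16 * real p * real r * sqrt m * sqrt (ln (real p)) = \<tau> + \<tau>"
    unfolding \<tau>_def N_def by simp
  have var: "(\<Sum>l\<in>I. (N * c l)\<^sup>2) = N\<^sup>2 * m"
    unfolding m_def by (simp add: power_mult_distrib sum_distrib_left)
  have decomposition: "(\<Sum>i<n. (frob_norm p r (Zmat \<omega> i))\<^sup>2 * frob_inner p r (Zmat \<omega> i) (M i))
      = (\<Sum>l\<in>I. (N * c l) * \<omega> l) + gaussian_chaos I (block_weight c) \<omega>" for \<omega>
    unfolding sum_frob_cube_decomposition I_def c_def N_def by (simp add: sum_distrib_left mult.assoc)
  have fin: "finite I" unfolding I_def by simp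
  have "0 < (\<Sum>l\<in>I. (N * c l)\<^sup>2)"
    unfolding var using \<open>m > 0\<close> \<open>real p \<le> N\<close> p by simp
  moreover have "(\<Sum>q\<in>I \<times> I. (block_weight c q)\<^sup>2) \<le> N * m"
    unfolding I_def m_def N_def sum_sq_block_weight by simp
  ultimately have "measure (iid_gaussian I)
      {\<omega> \<in> space (iid_gaussian I). \<bar>(\<Sum>l\<in>I. (N * c l) * \<omega> l) + gaussian_chaos I (block_weight c) \<omega>\<bar> \<ge> \<tau> + \<tau>}
    \<le> 2 * exp (- \<tau>\<^sup>2 / (2 * (\<Sum>l\<in>I. (N * c l)\<^sup>2))) + 10 * (N * m) / \<tau>\<^sup>2"
    by (rule iid_gaussian_linear_plus_chaos_tail[OF fin _ _ \<open>\<tau> > 0\<close> \<open>\<tau> > 0\<close>])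
  also have "\<dots> \<le> 1 / real p"
    unfolding var \<tau>_def using p \<open>real p \<le> N\<close> \<open>m > 0\<close> by (intro tail_budget_le_inverse) auto
  finally show ?thesis
    by (simp only: gauss_mats_def I_def[symmetric] decomposition m[symmetric] level)
qed

theorem lemma3:
  "\<exists>C C1 :: real. C > 0 \<and> C1 > 0 \<and>
    (\<forall>(n::nat) (p::nat) (r::nat) (M :: nat \<Rightarrow> nat \<Rightarrow> nat \<Rightarrow> real).
      p \<ge> 1 \<longrightarrow> r \<ge> 1 \<longrightarrow> (\<exists>i<n. frob_norm p r (M i) \<noteq> 0) \<longrightarrow>
      measure (gauss_mats n p r)
        {\<omega> \<in> space (gauss_mats n p r).
           \<bar>\<Sum>i<n. (frob_norm p r (Zmat \<omega> i))\<^sup>2 * frob_inner p r (Zmat \<omega> i) (M i)\<bar>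
             \<ge> C * real p * real r * sqrt (\<Sum>i<n. (frob_norm p r (M i))\<^sup>2) * sqrt (ln (real p))}
      \<le> real p powr (- C1))"
proof (rule exI[of _ 16], rule exI[of _ 1], intro conjI allI impI)
  fix n p r :: nat and M :: "nat \<Rightarrow> nat \<Rightarrow> nat \<Rightarrow> real"
  assume "p \<ge> 1" "r \<ge> 1" and nonzero: "\<exists>i<n. frob_norm p r (M i) \<noteq> 0"
  interpret prob_space "gauss_mats n p r"
    unfolding gauss_mats_def by (rule prob_space_iid_gaussian)
  consider "p = 1" | "2 \<le> p" using \<open>p \<ge> 1\<close> by linarith
  then show "measure (gauss_mats n p r)
        {\<omega> \<in> space (gauss_mats n p r).
           \<bar>\<Sum>i<n. (frob_norm p r (Zmat \<omega> i))\<^sup>2 * frob_inner p r (Zmat \<omega> i) (M i)\<bar>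
             \<ge> 16 * real p * real r * sqrt (\<Sum>i<n. (frob_norm p r (M i))\<^sup>2) * sqrt (ln (real p))}
      \<le> real p powr (- 1)"
  proof cases
    case 1
    then show ?thesis using prob_le_1 by simp
  next
    case 2
    then show ?thesis
      using sum_frob_cube_tail[OF _ \<open>r \<ge> 1\<close> nonzero] by (simp add: powr_minus_divide)
  qed
qed simp_all

end
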